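(* Let $Q$ be a finite inverse semigroup. Then every left I-order in $Q$ is straight.
   Context: For an element $a$ of an inverse semigroup $Q$, $a^{-1}$ is its unique inverse. A subsemigroup $S$ of $Q$ is a left I-order in $Q$ if every $q\in Q$ can be written $q=a^{-1}b$ with $a,b\in S$; it is straight if $a,b$ can always be chosen with $a\,\mathcal{R}\,b$ in $Q$ (Green's relation of $Q$). *)

theory Defs
  imports Main
begin

(* The inverse semigroup Q is modelled as the whole of a type 'a of class semigroup_mult. *)

definition inverse_semigroup :: "'a::semigroup_mult itself \<Rightarrow> bool" where
  "inverse_semigroup _ \<longleftrightarrow> (\<forall>a::'a. \<exists>!b. a * b * a = a \<and> b * a * b = b)"

definition sinv :: "'a::semigroup_mult \<Rightarrow> 'a" where
  "sinv a = (THE b. a * b * a = a \<and> b * a * b = b)"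

(* Green's relation R of Q: a Q^1 = b Q^1 *)
definition green_R :: "'a::semigroup_mult \<Rightarrow> 'a \<Rightarrow> bool" where
  "green_R a b \<longleftrightarrow> insert a (range (\<lambda>x. a * x)) = insert b (range (\<lambda>x. b * x))"

definition subsemigroup :: "'a::semigroup_mult set \<Rightarrow> bool" where
  "subsemigroup S \<longleftrightarrow> (\<forall>a\<in>S. \<forall>b\<in>S. a * b \<in> S)"

definition left_I_order :: "'a::semigroup_mult set \<Rightarrow> bool" where
  "left_I_order S \<longleftrightarrow> subsemigroup S \<and> (\<forall>q. \<exists>a\<in>S. \<exists>b\<in>S. q = sinv a * b)"

definition straight_left_I_order :: "'a::semigroup_mult set \<Rightarrow> bool" where
  "straight_left_I_order S \<longleftrightarrow> left_I_order S \<and>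
     (\<forall>q. \<exists>a\<in>S. \<exists>b\<in>S. q = sinv a * b \<and> green_R a b)"

end

theory Submission
  imports Defs
begin

(* Write q = a^-1 b with a, b in S and put e = a a^-1, f = b b^-1. If some x in S satisfies
   x^-1 x = e f, then q = (x a)^-1 (x b) and (x a)(x a)^-1 = x x^-1 = (x b)(x b)^-1, so x a R x b.
   Such an x exists for every idempotent g, by induction on the number of elements J-above g.
   Write g = c^-1 d with c, d in S; then g = c^-1 (d d^-1) c and g <= d^-1 d in the natural order.
   In a finite semigroup an idempotent is never J-equivalent to a strictly smaller one, so either
   g = d^-1 d and x = d works, or strictly fewer elements lie J-above d d^-1 than above g; then the
   induction hypothesis gives y in S with y^-1 y = d d^-1, and x = y c works. *)

lemma green_RI:
  fixes c d :: "'a::semigroup_mult"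
  assumes "c = d * u" and "d = c * v"
  shows "green_R c d"
proof -
  have ideal_mono: "insert x (range ((*) x)) \<subseteq> insert y (range ((*) y))"
    if "x = y * w" for x y w :: 'a
  proof -
    have "x \<in> range ((*) y)" and "x * z \<in> range ((*) y)" for z
      using that rangeI[of "(*) y" "w * z"] by (auto simp: mult.assoc)
    then show ?thesis by blast
  qed
  show ?thesis
    unfolding green_R_def using ideal_mono[OF assms(1)] ideal_mono[OF assms(2)] by (rule subset_antisym)
qed

(* spow x n is x^(n+1): without a unit there is no x^0. *)
fun spow :: "'a::semigroup_mult \<Rightarrow> nat \<Rightarrow> 'a" where
  "spow x 0 = x"
| "spow x (Suc n) = x * spow x n"

lemma spow_add: "spow x (Suc (m + n)) = spow x m * spow x n"
  by (induction m) (auto simp: mult.assoc)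

lemma spow_Suc_right: "spow x (Suc n) = spow x n * x"
  using spow_add[of x n 0] by simp

lemma spow_mult_right_absorb:
  assumes "x * g = x"
  shows "spow x n * g = spow x n"
  using assms by (induction n) (auto simp: mult.assoc)

lemma spow_periodic:
  assumes "spow x i = spow x (i + p)" and "i \<le> m"
  shows "spow x (m + k * p) = spow x m"
proof -
  have period: "spow x (m + p) = spow x m" if "i \<le> m" for m
    using that
  proof (induction m rule: dec_induct)
    case base
    then show ?case using assms(1) by simp
  next
    case (step m)
    then show ?case by simp
  qed
  show ?thesis
  proof (induction k)
    case (Suc k)
    have "spow x (m + Suc k * p) = spow x ((m + k * p) + p)"
      by (simp add: algebra_simps)
    also have "\<dots> = spow x (m + k * p)"
      using period assms(2) by simp
    finally show ?case using Suc by simp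
  qed simp
qed

lemma finite_spow_idempotent:
  assumes "finite (UNIV :: 'a::semigroup_mult set)"
  shows "\<exists>n. spow (x::'a) n * spow x n = spow x n"
proof -
  have "\<not> inj (spow x)"
    using inj_on_finite[of "spow x" UNIV UNIV] assms infinite_UNIV_nat by blast
  then obtain i j where "i < j" and "spow x i = spow x j"
    unfolding inj_def by (metis linorder_neqE_nat)
  define p where "p = j - i"
  have "p > 0" and repeat: "spow x i = spow x (i + p)"
    using \<open>i < j\<close> \<open>spow x i = spow x j\<close> by (simp_all add: p_def)
  define n where "n = Suc i * p - 1"
  have Suc_n: "Suc n = Suc i * p"
    using \<open>p > 0\<close> by (simp add: n_def)
  moreover have "Suc i \<le> Suc i * p"
    using \<open>p > 0\<close> by (cases p) simp_all
  ultimately have "i \<le> n"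
    by simp
  have "spow x n * spow x n = spow x (Suc (n + n))"
    by (rule spow_add[symmetric])
  also have "Suc (n + n) = n + Suc i * p"
    using Suc_n by simp
  also have "spow x (n + Suc i * p) = spow x n"
    by (rule spow_periodic[OF repeat \<open>i \<le> n\<close>])
  finally show ?thesis by blast
qed

lemma idempotent_eq_if_below_and_in_ideal:
  fixes g h :: "'a::semigroup_mult"
  assumes "finite (UNIV :: 'a set)"
    and "g * g = g" and "g * h = g" and "h * g = g"
    and "h = p * g * r"
  shows "g = h"
proof -
  define s where "s = p * g"
  define t where "t = g * r"
  have "s * g = s"
    using assms(2) by (simp add: s_def mult.assoc)
  have "s * h * t = p * (g * h * g) * r"
    by (simp add: s_def t_def mult.assoc)
  also have "\<dots> = h"
    using assms(2,3,5) by simp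
  finally have "s * h * t = h" .
  have conjugate: "spow s n * h * spow t n = h" for n
  proof (induction n)
    case 0
    show ?case
      unfolding spow.simps(1) by (rule \<open>s * h * t = h\<close>)
  next
    case (Suc n)
    have "spow s (Suc n) * h * spow t (Suc n) = s * (spow s n * h * spow t n) * t"
      by (simp only: spow.simps(2)[of s] spow_Suc_right[of t] mult.assoc)
    then show ?case
      unfolding Suc.IH by (simp only: \<open>s * h * t = h\<close>)
  qed
  (* h = e h t^n for an idempotent power e of s, and e absorbs both h and g *)
  obtain n where "spow s n * spow s n = spow s n"
    using finite_spow_idempotent[OF assms(1)] by blast
  define e where "e = spow s n"
  have "e * e = e" and "e * g = e"
    using \<open>spow s n * spow s n = spow s n\<close> spow_mult_right_absorb[OF \<open>s * g = s\<close>]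
    by (simp_all add: e_def)
  have h_eq: "e * h * spow t n = h"
    using conjugate[of n] by (simp only: e_def)
  have "e * h = e * (e * h * spow t n)"
    by (simp only: h_eq)
  also have "\<dots> = e * h * spow t n"
    using \<open>e * e = e\<close> by (simp flip: mult.assoc)
  finally have "h = e * h"
    by (simp only: h_eq)
  also have "\<dots> = e * g * h"
    by (simp only: \<open>e * g = e\<close>)
  also have "\<dots> = e * (g * h)"
    by (simp only: mult.assoc)
  also have "\<dots> = e"
    by (simp only: assms(3) \<open>e * g = e\<close>)
  finally have "h = e" .
  then show ?thesis
    using \<open>e * g = e\<close> assms(4) by simp
qed

definition J_upset :: "'a::semigroup_mult \<Rightarrow> 'a set" where
  "J_upset g = {y. \<exists>p r. g = p * y * r}"

lemma J_upset_mono: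
  assumes "g = p * k * r"
  shows "J_upset k \<subseteq> J_upset g"
proof
  fix y
  assume "y \<in> J_upset k"
  then obtain p' r' where "k = p' * y * r'"
    unfolding J_upset_def by blast
  then have "g = (p * p') * y * (r' * r)"
    using assms by (simp add: mult.assoc)
  then show "y \<in> J_upset g"
    unfolding J_upset_def by blast
qed

lemma idempotent_in_J_upset:
  assumes "g * g = g"
  shows "g \<in> J_upset g"
proof -
  have "g = g * g * g"
    using assms by simp
  then show ?thesis
    unfolding J_upset_def by blast
qed

context
  assumes inverse_semigroup: "inverse_semigroup TYPE('a::semigroup_mult)"
begin

lemma sinv_inverse:
  shows mult_sinv_mult: "(a::'a) * sinv a * a = a"
    and sinv_mult_sinv: "sinv a * a * sinv a = sinv a"
proof -
  have "\<exists>!b. a * b * a = a \<and> b * a * b = b"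
    using inverse_semigroup unfolding inverse_semigroup_def by blast
  then have "a * sinv a * a = a \<and> sinv a * a * sinv a = sinv a"
    unfolding sinv_def by (rule theI')
  then show "a * sinv a * a = a" and "sinv a * a * sinv a = sinv a"
    by auto
qed

lemma sinv_eqI:
  assumes "(a::'a) * b * a = a" and "b * a * b = b"
  shows "sinv a = b"
  using inverse_semigroup assms sinv_inverse[of a] unfolding inverse_semigroup_def by blast

lemma sinv_idem: "(e::'a) * e = e \<Longrightarrow> sinv e = e"
  by (rule sinv_eqI) (simp_all add: mult.assoc)

lemma sinv_sinv [simp]: "sinv (sinv (a::'a)) = a"
  by (rule sinv_eqI) (simp_all add: sinv_inverse)

lemma mult_sinv_idem: "(a::'a) * sinv a * (a * sinv a) = a * sinv a"
  and sinv_mult_idem: "sinv a * a * (sinv a * a) = sinv a * a"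
  by (simp_all add: mult_sinv_mult sinv_mult_sinv flip: mult.assoc)

lemma idempotent_mult:
  assumes "(e::'a) * e = e" and "f * f = f"
  shows "e * f * (e * f) = e * f"
proof -
  define z where "z = sinv (e * f)"
  have "sinv (e * f) = f * z * e"
  proof (rule sinv_eqI)
    have "e * f * (f * z * e) * (e * f) = e * (f * f) * z * (e * e) * f"
      by (simp add: mult.assoc)
    also have "\<dots> = e * f * z * (e * f)"
      using assms by (simp add: mult.assoc)
    finally show "e * f * (f * z * e) * (e * f) = e * f"
      by (simp add: z_def mult_sinv_mult)
    have "f * z * e * (e * f) * (f * z * e) = f * (z * (e * e) * (f * f) * z) * e"
      by (simp add: mult.assoc)
    also have "\<dots> = f * (z * (e * f) * z) * e"
      using assms by (simp add: mult.assoc)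
    finally show "f * z * e * (e * f) * (f * z * e) = f * z * e"
      by (simp add: z_def sinv_mult_sinv)
  qed
  then have z_eq: "f * z * e = z"
    unfolding z_def[symmetric] by (rule sym)
  have "z * z = f * z * e * (f * z * e)"
    by (simp only: z_eq)
  also have "\<dots> = f * (z * (e * f) * z) * e"
    by (simp add: mult.assoc)
  also have "\<dots> = f * z * e"
    by (simp only: z_def sinv_mult_sinv)
  also have "\<dots> = z"
    by (rule z_eq)
  finally have "z * z = z" .
  then have "e * f = z"
    using sinv_idem[OF \<open>z * z = z\<close>] by (simp add: z_def)
  then show ?thesis
    using \<open>z * z = z\<close> by simp
qed

lemma idempotents_commute:
  assumes "(e::'a) * e = e" and "f * f = f"
  shows "e * f = f * e"
proof -
  have ef: "e * f * (e * f) = e * f" and fe: "f * e * (f * e) = f * e"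
    using idempotent_mult assms by auto
  have "sinv (e * f) = f * e"
  proof (rule sinv_eqI)
    have "e * f * (f * e) * (e * f) = e * (f * f) * (e * e) * f"
      by (simp add: mult.assoc)
    also have "\<dots> = e * f * (e * f)"
      using assms by (simp add: mult.assoc)
    finally show "e * f * (f * e) * (e * f) = e * f"
      using ef by simp
    have "f * e * (e * f) * (f * e) = f * (e * e) * (f * f) * e"
      by (simp add: mult.assoc)
    also have "\<dots> = f * e * (f * e)"
      using assms by (simp add: mult.assoc)
    finally show "f * e * (e * f) * (f * e) = f * e"
      using fe by simp
  qed
  then show ?thesis
    using sinv_idem[OF ef] by simp
qed

lemma sinv_mult: "sinv ((a::'a) * b) = sinv b * sinv a"
proof (rule sinv_eqI)
  have commute: "sinv a * a * (b * sinv b) = b * sinv b * (sinv a * a)"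
    using idempotents_commute sinv_mult_idem mult_sinv_idem by blast
  have "a * b * (sinv b * sinv a) * (a * b) = a * (b * sinv b * (sinv a * a)) * b"
    by (simp add: mult.assoc)
  also have "\<dots> = a * (sinv a * a * (b * sinv b)) * b"
    using commute by simp
  also have "\<dots> = (a * sinv a * a) * (b * sinv b * b)"
    by (simp add: mult.assoc)
  finally show "a * b * (sinv b * sinv a) * (a * b) = a * b"
    by (simp add: mult_sinv_mult)
  have "sinv b * sinv a * (a * b) * (sinv b * sinv a) = sinv b * (sinv a * a * (b * sinv b)) * sinv a"
    by (simp add: mult.assoc)
  also have "\<dots> = sinv b * (b * sinv b * (sinv a * a)) * sinv a"
    using commute by simp
  also have "\<dots> = (sinv b * b * sinv b) * (sinv a * a * sinv a)"
    by (simp add: mult.assoc)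
  finally show "sinv b * sinv a * (a * b) * (sinv b * sinv a) = sinv b * sinv a"
    by (simp add: sinv_mult_sinv)
qed

lemma green_R_if_mult_sinv_eq:
  assumes "(c::'a) * sinv c = d * sinv d"
  shows "green_R c d"
proof (rule green_RI)
  show "c = d * (sinv d * c)"
    using assms mult_sinv_mult[of c] by (simp flip: mult.assoc)
  show "d = c * (sinv c * d)"
    using assms mult_sinv_mult[of d] by (simp flip: mult.assoc)
qed

lemma conj_eq_mult_sinv_if_below:
  assumes "sinv (x::'a) * x * e = sinv x * x"
  shows "x * e * sinv x = x * sinv x"
proof -
  have "x * e * sinv x = x * (sinv x * x * e) * sinv x"
    by (simp add: mult_sinv_mult flip: mult.assoc)
  also have "\<dots> = x * (sinv x * x) * sinv x"
    by (simp only: assms)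
  also have "\<dots> = x * sinv x"
    by (simp add: mult_sinv_mult flip: mult.assoc)
  finally show ?thesis .
qed

context
  assumes finite_UNIV: "finite (UNIV :: 'a set)"
begin

lemma left_I_order_idempotent_eq_sinv_mult_self:
  assumes "left_I_order S" and "(g::'a) * g = g"
  shows "\<exists>x\<in>S. sinv x * x = g"
  using assms(2)
proof (induction "card (J_upset g)" arbitrary: g rule: less_induct)
  case less
  obtain c d where "c \<in> S" "d \<in> S" and g: "g = sinv c * d"
    using assms(1) unfolding left_I_order_def by blast
  define h where "h = sinv d * d"
  define k where "k = d * sinv d"
  have "h * h = h" and "k * k = k"
    by (simp_all add: h_def k_def sinv_mult_idem mult_sinv_idem)
  have "g * h = sinv c * (d * sinv d * d)"
    by (simp add: g h_def mult.assoc)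
  then have "g * h = g"
    by (simp add: g mult_sinv_mult)
  moreover have "h * g = g"
    using idempotents_commute[OF \<open>h * h = h\<close> less.prems] calculation by simp
  moreover have g_conj: "g = sinv c * k * c"
  proof -
    have "g = sinv g"
      using sinv_idem[OF less.prems] by simp
    also have "\<dots> = sinv d * c"
      by (simp add: g sinv_mult)
    finally have "g = sinv d * c" .
    with g have "g * g = sinv c * d * (sinv d * c)"
      by (rule arg_cong2[where f = "(*)"])
    then show ?thesis
      using less.prems by (simp add: k_def mult.assoc)
  qed
  show ?case
  proof (cases "g = h")
    case True
    then show ?thesis using \<open>d \<in> S\<close> h_def by blast
  next
    case False
    have "g \<notin> J_upset k"
    proof
      assume "g \<in> J_upset k"
      then obtain p r where "k = p * g * r"
        unfolding J_upset_def by blast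
      have "h = sinv d * d * sinv d * d"
        by (simp add: h_def sinv_mult_sinv)
      also have "\<dots> = (sinv d * p) * g * (r * d)"
        using \<open>k = p * g * r\<close> by (simp add: k_def mult.assoc)
      finally show False
        using idempotent_eq_if_below_and_in_ideal[OF finite_UNIV less.prems] \<open>g * h = g\<close> \<open>h * g = g\<close> False
        by blast
    qed
    then have "J_upset k \<subset> J_upset g"
      using J_upset_mono[OF g_conj] idempotent_in_J_upset[OF less.prems] by blast
    then have "card (J_upset k) < card (J_upset g)"
      by (meson finite_UNIV finite_subset psubset_card_mono top_greatest)
    then obtain y where "y \<in> S" and y: "sinv y * y = k"
      using less.hyps \<open>k * k = k\<close> by blast
    have "y * c \<in> S"
      using assms(1) \<open>y \<in> S\<close> \<open>c \<in> S\<close> unfolding left_I_order_def subsemigroup_def by blast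
    moreover have "sinv (y * c) * (y * c) = sinv c * (sinv y * y) * c"
      by (simp add: sinv_mult mult.assoc)
    ultimately show ?thesis
      using y g_conj by auto
  qed
qed

lemma left_I_order_straighten:
  assumes "left_I_order S" and "a \<in> S" and "b \<in> S"
  shows "\<exists>c\<in>S. \<exists>d\<in>S. sinv (a::'a) * b = sinv c * d \<and> green_R c d"
proof -
  define e where "e = a * sinv a"
  define f where "f = b * sinv b"
  have "e * e = e" and "f * f = f"
    by (simp_all add: e_def f_def mult_sinv_idem)
  then have "e * f * (e * f) = e * f"
    by (rule idempotent_mult)
  then obtain x where "x \<in> S" and x: "sinv x * x = e * f"
    using left_I_order_idempotent_eq_sinv_mult_self[OF assms(1)] by blast
  have "x * a \<in> S" and "x * b \<in> S"
    using assms \<open>x \<in> S\<close> unfolding left_I_order_def subsemigroup_def by blast+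
  moreover have "sinv a * b = sinv (x * a) * (x * b)"
  proof -
    have "sinv (x * a) * (x * b) = sinv a * (sinv x * x) * b"
      by (simp add: sinv_mult mult.assoc)
    also have "\<dots> = (sinv a * a * sinv a) * (b * sinv b * b)"
      using x by (simp add: e_def f_def mult.assoc)
    finally show ?thesis
      by (simp add: sinv_mult_sinv mult_sinv_mult)
  qed
  moreover have "green_R (x * a) (x * b)"
  proof (rule green_R_if_mult_sinv_eq)
    have "e * f = f * e"
      using idempotents_commute[OF \<open>e * e = e\<close> \<open>f * f = f\<close>] .
    have "sinv x * x * e = e * (f * e)"
      by (simp only: x mult.assoc)
    also have "\<dots> = e * (e * f)"
      by (simp only: \<open>e * f = f * e\<close>)
    also have "\<dots> = sinv x * x"
      by (simp only: x \<open>e * e = e\<close> flip: mult.assoc)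
    finally have "sinv x * x * e = sinv x * x" .
    have "sinv x * x * f = e * (f * f)"
      by (simp only: x mult.assoc)
    also have "\<dots> = sinv x * x"
      by (simp only: x \<open>f * f = f\<close>)
    finally have "sinv x * x * f = sinv x * x" .
    then have "x * e * sinv x = x * sinv x" and "x * f * sinv x = x * sinv x"
      using \<open>sinv x * x * e = sinv x * x\<close> conj_eq_mult_sinv_if_below by blast+
    then show "x * a * sinv (x * a) = x * b * sinv (x * b)"
      by (simp add: sinv_mult e_def f_def mult.assoc)
  qed
  ultimately show ?thesis by blast
qed

end

end

theorem corollary2p5:
  fixes S :: "'a::semigroup_mult set"
  assumes "finite (UNIV :: 'a set)"
    and "inverse_semigroup TYPE('a)"
    and "left_I_order S"
  shows "straight_left_I_order S"
proof -
  have "\<exists>c\<in>S. \<exists>d\<in>S. q = sinv c * d \<and> green_R c d" for q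
  proof -
    obtain a b where "a \<in> S" "b \<in> S" "q = sinv a * b"
      using assms(3) unfolding left_I_order_def by blast
    then show ?thesis
      using left_I_order_straighten[OF assms(2,1,3)] by blast
  qed
  then show ?thesis
    using assms(3) unfolding straight_left_I_order_def by blast
qed

end
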